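(* Let $t\colon \mathbb{N}_0 \to \{\pm 1\}$ be the Thue-Morse sequence. For every $s \in \mathbb{N}$ there exists $c = c(s) > 0$ such that $\|t\|_{U^s[N]} = O(N^{-c})$ as $N \to \infty$.
   Context: The Thue-Morse sequence is $t(n) = (-1)^{s_2(n)}$, where $s_2(n)$ is the sum of the binary digits of $n$; equivalently $t(0)=1$, $t(2n)=t(n)$, $t(2n+1)=-t(n)$. For $N \in \mathbb{N}$ write $[N] = \{0,1,\dots,N-1\}$. For $s\in\mathbb{N}$ and $f\colon [N]\to\mathbb{R}$, the Gowers uniformity norm is defined by $\|f\|_{U^s[N]}^{2^s} = \mathbb{E}_{n,\mathbf h} \prod_{\omega\in\{0,1\}^s} f(n+\omega\cdot \mathbf h)$, where $\omega\cdot\mathbf h = \sum_{i=1}^s \omega_i h_i$ and the expectation is over all $n\in\mathbb{Z}$, $\mathbf h\in\mathbb{Z}^s$ such that the cube $\{n+\omega\cdot\mathbf h : \omega\in\{0,1\}^s\}$ is contained in $[N]$. Here $\|t\|_{U^s[N]}$ means the norm of the restriction of $t$ to $[N]$. *)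

theory Defs
  imports "HOL-Analysis.Analysis" "HOL-Library.Landau_Symbols"
begin

fun thue_morse :: "nat \<Rightarrow> real" where
  "thue_morse n = (if n = 0 then 1
                   else if even n then thue_morse (n div 2) else - thue_morse (n div 2))"

definition cube_dot :: "bool list \<Rightarrow> int list \<Rightarrow> int" where
  "cube_dot \<omega> hs = (\<Sum>i<length hs. if \<omega> ! i then hs ! i else 0)"

definition cube_vertices :: "nat \<Rightarrow> bool list set" where
  "cube_vertices s = {\<omega>. length \<omega> = s}"

definition gowers_cubes :: "nat \<Rightarrow> nat \<Rightarrow> (int \<times> int list) set" where
  "gowers_cubes s N = {(n, hs). length hs = s \<and>
      (\<forall>\<omega>\<in>cube_vertices s. 0 \<le> n + cube_dot \<omega> hs \<and> n + cube_dot \<omega> hs < int N)}"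

definition gowers_power :: "nat \<Rightarrow> nat \<Rightarrow> (nat \<Rightarrow> real) \<Rightarrow> real" where
  "gowers_power s N f =
     (\<Sum>(n, hs)\<in>gowers_cubes s N.
        \<Prod>\<omega>\<in>cube_vertices s. f (nat (n + cube_dot \<omega> hs))) / real (card (gowers_cubes s N))"

definition gowers_norm :: "nat \<Rightarrow> nat \<Rightarrow> (nat \<Rightarrow> real) \<Rightarrow> real" where
  "gowers_norm s N f = root (2 ^ s) (gowers_power s N f)"

end

theory Submission
  imports Defs
begin

text \<open>Splitting off the lowest \<open>k\<close> binary digits of \<open>n\<close> and of \<open>h\<^sub>1, \<dots>, h\<^sub>s\<close> and using
  \<open>t (2^k a + b) = t a * t b\<close> for \<open>b < 2^k\<close>, the cube sum at scale \<open>N\<close> becomes a sum over the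
  \<open>2^(k(s+1))\<close> blocks of low digits, each contributing a sign times a cube sum at scale
  \<open>N div 2^k\<close> whose vertices are shifted by the carries.  Since \<open>\<Prod>\<^sub>\<omega> t (y + |\<omega>|) = -1\<close> for
  some \<open>y\<close>, two blocks have identical carries but opposite signs and cancel.  Iterating, the sum
  is \<open>O(N^\<alpha>)\<close> with \<open>(2^k)^\<alpha> = 2^(k(s+1)) - 2\<close>, so \<open>\<alpha> < s + 1\<close>, while there are
  \<open>\<ge> c N^(s+1)\<close> cubes.\<close>

lemma int_le_div_iff_mult_le:
  fixes K z m :: int
  assumes "K > 0"
  shows "z \<le> m div K \<longleftrightarrow> K * z \<le> m"
  using assms
  by (smt (verit, best) mod_mult_div_eq nonzero_mult_div_cancel_left pos_mod_sign zdiv_mono1)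

lemma int_div_eq_iff:
  fixes K q m :: int
  assumes "K > 0"
  shows "m div K = q \<longleftrightarrow> K * q \<le> m \<and> m < K * q + K"
  using int_le_div_iff_mult_le[OF assms, of q m] int_le_div_iff_mult_le[OF assms, of "q + 1" m]
  by (auto simp: algebra_simps)

lemma mult_add_nonneg_iff:
  fixes K Y b :: int
  assumes "0 \<le> b" "b < K"
  shows "0 \<le> K * Y + b \<longleftrightarrow> 0 \<le> Y"
proof
  assume "0 \<le> K * Y + b"
  then have "K * (-1) < K * Y" using assms by linarith
  then show "0 \<le> Y" using mult_less_cancel_left_pos[of K "-1" Y] assms by simp
qed (use assms in simp)

lemma mult_add_less_iff_less_div:
  fixes K Y b M c :: int
  assumes K: "K > 0" and "0 \<le> b" "b < K"
  shows "K * Y + b < K * M + c \<longleftrightarrow> Y < M + (c - b - 1 + K) div K"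
proof -
  have "K * (Y - M) = K * Y - K * M" by (simp add: algebra_simps)
  then have "K * Y + b < K * M + c \<longleftrightarrow> K * (Y - M) \<le> c - b - 1" by linarith
  also have "\<dots> \<longleftrightarrow> Y - M \<le> (c - b - 1) div K" using int_le_div_iff_mult_le[OF K] by simp
  also have "(c - b - 1 + K) div K = (c - b - 1) div K + 1" using K by simp
  ultimately show ?thesis by linarith
qed

section \<open>The Thue--Morse sequence\<close>

declare thue_morse.simps [simp del]

lemma thue_morse_0 [simp]: "thue_morse 0 = 1"
  by (simp add: thue_morse.simps)

lemma thue_morse_double [simp]: "thue_morse (2 * n) = thue_morse n"
  by (cases "n = 0") (simp_all add: thue_morse.simps[of "2 * n"])

lemma thue_morse_double_plus_1 [simp]: "thue_morse (2 * n + 1) = - thue_morse n"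
  using thue_morse.simps[of "2 * n + 1"] by simp

lemma thue_morse_cases: "thue_morse n = 1 \<or> thue_morse n = -1"
proof (induction n rule: less_induct)
  case (less n)
  show ?case
  proof (cases "n = 0")
    case False
    then have "n div 2 < n" by simp
    with less show ?thesis by (auto simp add: thue_morse.simps[of n])
  qed simp
qed

lemma thue_morse_mult_self: "thue_morse n * thue_morse n = 1"
  using thue_morse_cases[of n] by auto

lemma abs_thue_morse [simp]: "\<bar>thue_morse n\<bar> = 1"
  using thue_morse_cases[of n] by auto

lemma thue_morse_power2_mult_add:
  "b < 2 ^ j \<Longrightarrow> thue_morse (2 ^ j * a + b) = thue_morse a * thue_morse b"
proof (induction j arbitrary: a b)
  case (Suc j)
  have "b div 2 < 2 ^ j" using Suc.prems by simp
  note IH = Suc.IH[OF this]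
  show ?case
  proof (cases "even b")
    case True
    then have "2 ^ Suc j * a + b = 2 * (2 ^ j * a + b div 2)" "b = 2 * (b div 2)" by auto
    then show ?thesis using IH by (metis thue_morse_double)
  next
    case False
    then have "2 ^ Suc j * a + b = 2 * (2 ^ j * a + b div 2) + 1" "b = 2 * (b div 2) + 1"
      by (auto elim: oddE)
    then show ?thesis using IH by (metis mult_minus_right thue_morse_double_plus_1)
  qed
qed simp

lemma thue_morse_power2: "thue_morse (2 ^ a) = -1"
proof (induction a)
  case 0 then show ?case using thue_morse_double_plus_1[of 0] by simp
next
  case (Suc a) then show ?case by (metis power_Suc thue_morse_double)
qed

definition mult_diff :: "(nat \<Rightarrow> real) \<Rightarrow> nat \<Rightarrow> real" where
  "mult_diff g y = g y * g (y + 1)"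

lemma mult_diff_iter_mult_self:
  assumes "\<And>y. g y * g y = 1"
  shows "(mult_diff ^^ j) g y * (mult_diff ^^ j) g y = 1"
  using assms
proof (induction j arbitrary: y)
  case (Suc j)
  have "(mult_diff ^^ Suc j) g y * (mult_diff ^^ Suc j) g y =
      ((mult_diff ^^ j) g y * (mult_diff ^^ j) g y) *
      ((mult_diff ^^ j) g (y + 1) * (mult_diff ^^ j) g (y + 1))"
    by (simp add: mult_diff_def algebra_simps)
  then show ?case using Suc by simp
qed simp

text \<open>For a \<open>\<plusminus>1\<close>-valued \<open>g\<close>, the intermediate factors cancel in pairs.\<close>
lemma mult_diff_iter_power2:
  assumes "\<And>y. g y * g y = 1"
  shows "(mult_diff ^^ (2 ^ a)) g y = g y * g (y + 2 ^ a)"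
  using assms
proof (induction a arbitrary: g y)
  case 0 then show ?case by (simp add: mult_diff_def)
next
  case (Suc a)
  define h where "h = (mult_diff ^^ (2 ^ a)) g"
  have h: "h = (\<lambda>y. g y * g (y + 2 ^ a))" unfolding h_def using Suc by auto
  have h_sq: "h y * h y = 1" for y
    using Suc.prems[of y] Suc.prems[of "y + 2 ^ a"] by (simp add: h algebra_simps)
  have "(mult_diff ^^ (2 ^ Suc a)) g y = (mult_diff ^^ (2 ^ a)) h y"
    by (simp add: h_def funpow_add mult_2)
  also have "\<dots> = h y * h (y + 2 ^ a)" using Suc.IH[of h] h_sq by blast
  also have "\<dots> = g y * g (y + 2 ^ Suc a) * (g (y + 2 ^ a) * g (y + 2 ^ a))"
    by (simp add: h algebra_simps mult_2)
  also have "\<dots> = g y * g (y + 2 ^ Suc a)" using Suc.prems by simp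
  finally show ?case .
qed

lemma mult_diff_iter_const_1: "(mult_diff ^^ j) (\<lambda>_. 1) = (\<lambda>_. 1)"
  by (induction j) (auto simp: mult_diff_def)

text \<open>Otherwise \<open>(mult_diff ^^ 2^s) thue_morse\<close> would be identically \<open>1\<close>, but its value at \<open>0\<close>
  is \<open>t 0 * t (2^s) = -1\<close>.\<close>
lemma thue_morse_mult_diff_iter_neg: "\<exists>y. (mult_diff ^^ s) thue_morse y = -1"
proof (rule ccontr)
  assume "\<nexists>y. (mult_diff ^^ s) thue_morse y = -1"
  moreover have "(mult_diff ^^ s) thue_morse y = 1 \<or> (mult_diff ^^ s) thue_morse y = -1" for y
    using mult_diff_iter_mult_self[of thue_morse s y] thue_morse_mult_self
    by (metis square_eq_1_iff)
  ultimately have one: "(mult_diff ^^ s) thue_morse = (\<lambda>_. 1)" by auto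
  have "s \<le> 2 ^ s" by (simp add: less_imp_le)
  then have "(mult_diff ^^ (2 ^ s)) thue_morse = (mult_diff ^^ (2 ^ s - s)) ((mult_diff ^^ s) thue_morse)"
    by (metis funpow_add le_add_diff_inverse2 o_apply)
  also have "\<dots> = (\<lambda>_. 1)" by (simp add: one mult_diff_iter_const_1)
  finally have "(mult_diff ^^ (2 ^ s)) thue_morse 0 = 1" by simp
  moreover have "(mult_diff ^^ (2 ^ s)) thue_morse 0 = -1"
    using mult_diff_iter_power2[of thue_morse s 0] thue_morse_mult_self thue_morse_power2 by simp
  ultimately show False by simp
qed

section \<open>Cubes\<close>

lemma cube_dot_Nil [simp]: "cube_dot \<omega> [] = 0"
  unfolding cube_dot_def by simp

lemma cube_dot_Cons [simp]: "cube_dot (b # \<omega>) (x # hs) = (if b then x else 0) + cube_dot \<omega> hs"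
  unfolding cube_dot_def length_Cons sum.lessThan_Suc_shift by (simp cong: if_cong)

definition cube_weight :: "bool list \<Rightarrow> nat" where
  "cube_weight \<omega> = length (filter id \<omega>)"

lemma cube_weight_Nil [simp]: "cube_weight [] = 0"
  by (simp add: cube_weight_def)

lemma cube_weight_Cons [simp]: "cube_weight (b # \<omega>) = (if b then 1 else 0) + cube_weight \<omega>"
  by (simp add: cube_weight_def)

lemma cube_weight_le_length: "cube_weight \<omega> \<le> length \<omega>"
  by (simp add: cube_weight_def)

lemma cube_dot_replicate:
  "length \<omega> = n \<Longrightarrow> cube_dot \<omega> (replicate n c) = c * int (cube_weight \<omega>)"
  by (induction \<omega> arbitrary: n) (auto simp: algebra_simps)

lemma cube_dot_map2_affine:
  "length hs = length fs \<Longrightarrow>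
    cube_dot \<omega> (map2 (\<lambda>a b. K * a + b) hs fs) = K * cube_dot \<omega> hs + cube_dot \<omega> fs"
  unfolding cube_dot_def
  by (auto simp add: sum_distrib_left sum.distrib[symmetric] intro!: sum.cong)

lemma cube_dot_bounds:
  assumes "\<forall>x\<in>set hs. 0 \<le> x \<and> x \<le> b"
  shows "0 \<le> cube_dot \<omega> hs \<and> cube_dot \<omega> hs \<le> int (length hs) * b"
proof -
  have "0 \<le> cube_dot \<omega> hs" unfolding cube_dot_def using assms by (auto intro!: sum_nonneg)
  moreover have "cube_dot \<omega> hs \<le> (\<Sum>i<length hs. b)"
    unfolding cube_dot_def using assms nth_mem by (intro sum_mono) fastforce
  ultimately show ?thesis by simp
qed

lemma cube_dot_replicate_False: "length hs = n \<Longrightarrow> cube_dot (replicate n False) hs = 0"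
  unfolding cube_dot_def by simp

lemma cube_dot_unit_vector:
  assumes "i < length hs"
  shows "cube_dot ((replicate (length hs) False)[i := True]) hs = hs ! i"
proof -
  have "cube_dot ((replicate (length hs) False)[i := True]) hs =
      (\<Sum>j<length hs. if j = i then hs ! j else 0)"
    unfolding cube_dot_def by (intro sum.cong) (auto simp: nth_list_update)
  with assms show ?thesis by simp
qed

lemma replicate_False_in_cube_vertices: "replicate s False \<in> cube_vertices s"
  by (simp add: cube_vertices_def)

lemma unit_vector_in_cube_vertices: "(replicate s False)[i := True] \<in> cube_vertices s"
  by (simp add: cube_vertices_def)

lemma finite_cube_vertices [simp]: "finite (cube_vertices s)"
  using finite_lists_length_eq[of "UNIV :: bool set" s] by (simp add: cube_vertices_def)

lemma cube_vertices_Suc: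
  "cube_vertices (Suc s) = Cons True ` cube_vertices s \<union> Cons False ` cube_vertices s"
proof -
  have "\<omega> \<in> Cons True ` cube_vertices s \<union> Cons False ` cube_vertices s"
    if "length \<omega> = Suc s" for \<omega>
    using that by (cases \<omega>) (auto simp: cube_vertices_def image_iff)
  then show ?thesis by (auto simp: cube_vertices_def)
qed

lemma prod_cube_vertices_mult_diff_iter:
  "(\<Prod>\<omega>\<in>cube_vertices s. g (y + cube_weight \<omega>)) = (mult_diff ^^ s) g y"
proof (induction s arbitrary: y)
  case 0
  have "cube_vertices 0 = {[]}" by (auto simp: cube_vertices_def)
  then show ?case by simp
next
  case (Suc s)
  have "(\<Prod>\<omega>\<in>cube_vertices (Suc s). g (y + cube_weight \<omega>)) =
     (\<Prod>\<omega>\<in>Cons True ` cube_vertices s. g (y + cube_weight \<omega>)) *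
     (\<Prod>\<omega>\<in>Cons False ` cube_vertices s. g (y + cube_weight \<omega>))"
    unfolding cube_vertices_Suc by (rule prod.union_disjoint) auto
  also have "\<dots> = (\<Prod>\<omega>\<in>cube_vertices s. g (y + 1 + cube_weight \<omega>)) *
     (\<Prod>\<omega>\<in>cube_vertices s. g (y + cube_weight \<omega>))"
    by (simp add: prod.reindex add.assoc)
  also have "\<dots> = (mult_diff ^^ s) g y * (mult_diff ^^ s) g (y + 1)"
    using Suc.IH[of "y + 1"] Suc.IH[of y] by simp
  also have "\<dots> = (mult_diff ^^ Suc s) g y"
    unfolding funpow.simps(2) o_apply mult_diff_def[of "(mult_diff ^^ s) g" y] ..
  finally show ?case .
qed

section \<open>Shifted cube sums\<close>

text \<open>The numerator of \<open>gowers_power s N thue_morse\<close>, generalized so that vertex \<open>\<omega>\<close> of the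
  cube is translated by \<open>r \<omega>\<close> and may reach up to \<open>N + d \<omega> - 1\<close>: this is the shape produced by
  splitting off the lowest \<open>k\<close> binary digits, the shifts being carries.\<close>
definition shifted_cubes ::
    "nat \<Rightarrow> nat \<Rightarrow> (bool list \<Rightarrow> int) \<Rightarrow> (bool list \<Rightarrow> int) \<Rightarrow> (int \<times> int list) set" where
  "shifted_cubes s N r d = {(n, hs). length hs = s \<and> (\<forall>\<omega>\<in>cube_vertices s.
       0 \<le> n + cube_dot \<omega> hs + r \<omega> \<and> n + cube_dot \<omega> hs + r \<omega> < int N + d \<omega>)}"

definition tm_cube_sum :: "nat \<Rightarrow> nat \<Rightarrow> (bool list \<Rightarrow> int) \<Rightarrow> (bool list \<Rightarrow> int) \<Rightarrow> real" where
  "tm_cube_sum s N r d = (\<Sum>(n, hs)\<in>shifted_cubes s N r d.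
      \<Prod>\<omega>\<in>cube_vertices s. thue_morse (nat (n + cube_dot \<omega> hs + r \<omega>)))"

lemma shifted_cubes_0_0: "shifted_cubes s N (\<lambda>_. 0) (\<lambda>_. 0) = gowers_cubes s N"
  unfolding shifted_cubes_def gowers_cubes_def by simp

lemma gowers_power_thue_morse_eq:
  "gowers_power s N thue_morse = tm_cube_sum s N (\<lambda>_. 0) (\<lambda>_. 0) / real (card (gowers_cubes s N))"
  unfolding gowers_power_def tm_cube_sum_def shifted_cubes_0_0 by simp

lemma tm_cube_sum_cong:
  assumes "\<And>\<omega>. \<omega> \<in> cube_vertices s \<Longrightarrow> r \<omega> = r' \<omega>"
    and "\<And>\<omega>. \<omega> \<in> cube_vertices s \<Longrightarrow> d \<omega> = d' \<omega>"
  shows "tm_cube_sum s N r d = tm_cube_sum s N r' d'"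
proof -
  have "shifted_cubes s N r d = shifted_cubes s N r' d'"
    by (force simp: shifted_cubes_def assms)
  then show ?thesis unfolding tm_cube_sum_def
    by (intro sum.cong refl) (auto intro!: prod.cong simp: assms(1))
qed

text \<open>The vertex \<open>0\<close> bounds \<open>n\<close> and the unit vertices bound the entries of \<open>hs\<close>.\<close>
lemma finite_shifted_cubes [simp]: "finite (shifted_cubes s N r d)"
proof -
  define R where "R = (\<Sum>\<omega>\<in>cube_vertices s. \<bar>r \<omega>\<bar> + \<bar>d \<omega>\<bar>)"
  have R: "\<bar>r \<omega>\<bar> \<le> R \<and> \<bar>d \<omega>\<bar> \<le> R" if "\<omega> \<in> cube_vertices s" for \<omega>
  proof -
    have "\<bar>r \<omega>\<bar> + \<bar>d \<omega>\<bar> \<le> R" unfolding R_def by (rule member_le_sum) (use that in auto)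
    then show ?thesis by auto
  qed
  define B where "B = int N + 3 * R + 1"
  have "shifted_cubes s N r d \<subseteq> {-B..B} \<times> {xs. set xs \<subseteq> {-B..B} \<and> length xs = s}"
  proof safe
    fix n hs assume "(n, hs) \<in> shifted_cubes s N r d"
    then have len: "length hs = s" and vertex: "\<And>\<omega>. \<omega> \<in> cube_vertices s \<Longrightarrow>
        0 \<le> n + cube_dot \<omega> hs + r \<omega> \<and> n + cube_dot \<omega> hs + r \<omega> < int N + d \<omega>"
      by (auto simp: shifted_cubes_def)
    let ?z = "replicate s False"
    have z: "0 \<le> n + r ?z \<and> n + r ?z < int N + d ?z"
      using vertex[OF replicate_False_in_cube_vertices] cube_dot_replicate_False[OF len] by simp
    note Rz = R[OF replicate_False_in_cube_vertices]
    show "n \<in> {-B..B}" using z Rz unfolding B_def by auto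
    show "length hs = s" by (fact len)
    fix x assume "x \<in> set hs"
    then obtain i where i: "i < length hs" "x = hs ! i" by (auto simp: in_set_conv_nth)
    let ?w = "(replicate s False)[i := True]"
    have "cube_dot ?w hs = x" using cube_dot_unit_vector[OF i(1)] i(2) len by simp
    then have "0 \<le> n + x + r ?w \<and> n + x + r ?w < int N + d ?w"
      using vertex[OF unit_vector_in_cube_vertices[of s i]] by simp
    then show "x \<in> {-B..B}" using R[OF unit_vector_in_cube_vertices[of s i]] z Rz unfolding B_def by auto
  qed
  moreover have "finite ({-B..B} \<times> {xs. set xs \<subseteq> {-B..B} \<and> length xs = s})"
    by (intro finite_cartesian_product finite_lists_length_eq) auto
  ultimately show ?thesis by (rule finite_subset)
qed

lemma abs_tm_cube_sum_le_card: "\<bar>tm_cube_sum s N r d\<bar> \<le> real (card (shifted_cubes s N r d))"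
proof -
  have "\<bar>tm_cube_sum s N r d\<bar> \<le> (\<Sum>(n, hs)\<in>shifted_cubes s N r d.
      \<bar>\<Prod>\<omega>\<in>cube_vertices s. thue_morse (nat (n + cube_dot \<omega> hs + r \<omega>))\<bar>)"
    unfolding tm_cube_sum_def split_def by (rule sum_abs)
  also have "\<dots> = real (card (shifted_cubes s N r d))"
    by (simp add: abs_prod split_def)
  finally show ?thesis .
qed

text \<open>With \<open>N = 0\<close> and \<open>d \<le> 1\<close> every vertex is pinned to a single value.\<close>
lemma abs_tm_cube_sum_0_le_1:
  assumes "\<And>\<omega>. \<omega> \<in> cube_vertices s \<Longrightarrow> d \<omega> \<le> 1"
  shows "\<bar>tm_cube_sum s 0 r d\<bar> \<le> 1"
proof -
  have pinned: "n + cube_dot \<omega> hs + r \<omega> = 0"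
    if "(n, hs) \<in> shifted_cubes s 0 r d" "\<omega> \<in> cube_vertices s" for n hs \<omega>
    using that assms[of \<omega>] unfolding shifted_cubes_def by fastforce
  have "card (shifted_cubes s 0 r d) \<le> Suc 0"
  proof (subst card_le_Suc0_iff_eq[OF finite_shifted_cubes], safe)
    fix n hs n' hs'
    assume c: "(n, hs) \<in> shifted_cubes s 0 r d" and c': "(n', hs') \<in> shifted_cubes s 0 r d"
    have len: "length hs = s" "length hs' = s" using c c' by (auto simp: shifted_cubes_def)
    let ?z = "replicate s False"
    have z: "n + r ?z = 0" "n' + r ?z = 0"
      using pinned[OF c replicate_False_in_cube_vertices] pinned[OF c' replicate_False_in_cube_vertices]
      by (simp_all add: cube_dot_replicate_False len)
    then show "n = n'" by simp
    show "hs = hs'"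
    proof (rule nth_equalityI)
      fix i assume "i < length hs"
      then have i: "i < length hs" "i < length hs'" using len by auto
      let ?w = "(replicate s False)[i := True]"
      have "cube_dot ?w hs = hs ! i" "cube_dot ?w hs' = hs' ! i"
        using cube_dot_unit_vector[OF i(1)] cube_dot_unit_vector[OF i(2)] len by simp_all
      then have "n + hs ! i + r ?w = 0" "n' + hs' ! i + r ?w = 0"
        using pinned[OF c unit_vector_in_cube_vertices[of s i]]
          pinned[OF c' unit_vector_in_cube_vertices[of s i]] by simp_all
      with z show "hs ! i = hs' ! i" by simp
    qed (use len in simp)
  qed
  then show ?thesis using abs_tm_cube_sum_le_card[of s 0 r d] by simp
qed

section \<open>Splitting off the low binary digits\<close>

definition low_blocks :: "nat \<Rightarrow> nat \<Rightarrow> (int \<times> int list) set" where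
  "low_blocks s k = {0..<2 ^ k} \<times> {fs. set fs \<subseteq> {0..<2 ^ k} \<and> length fs = s}"

definition vertex_offset :: "int \<Rightarrow> int list \<Rightarrow> (bool list \<Rightarrow> int) \<Rightarrow> bool list \<Rightarrow> int" where
  "vertex_offset e fs r \<omega> = e + cube_dot \<omega> fs + r \<omega>"

definition carry :: "nat \<Rightarrow> int \<Rightarrow> int list \<Rightarrow> (bool list \<Rightarrow> int) \<Rightarrow> bool list \<Rightarrow> int" where
  "carry k e fs r \<omega> = vertex_offset e fs r \<omega> div 2 ^ k"

definition vertex_residue :: "nat \<Rightarrow> int \<Rightarrow> int list \<Rightarrow> (bool list \<Rightarrow> int) \<Rightarrow> bool list \<Rightarrow> int" where
  "vertex_residue k e fs r \<omega> = vertex_offset e fs r \<omega> mod 2 ^ k"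

text \<open>For \<open>0 \<le> b < 2^k\<close>, \<open>2^k Y + b < N + d\<close> holds iff \<open>Y < N div 2^k + carried_slack\<close>.\<close>
definition carried_slack ::
    "nat \<Rightarrow> nat \<Rightarrow> (bool list \<Rightarrow> int) \<Rightarrow> int \<Rightarrow> int list \<Rightarrow> (bool list \<Rightarrow> int) \<Rightarrow> bool list \<Rightarrow> int" where
  "carried_slack k N d e fs r \<omega> =
     (int (N mod 2 ^ k) + d \<omega> - vertex_residue k e fs r \<omega> - 1 + 2 ^ k) div 2 ^ k"

definition residue_sign :: "nat \<Rightarrow> nat \<Rightarrow> int \<Rightarrow> int list \<Rightarrow> (bool list \<Rightarrow> int) \<Rightarrow> real" where
  "residue_sign s k e fs r = (\<Prod>\<omega>\<in>cube_vertices s. thue_morse (nat (vertex_residue k e fs r \<omega>)))"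

definition digit_join :: "nat \<Rightarrow> (int \<times> int list) \<times> (int \<times> int list) \<Rightarrow> int \<times> int list" where
  "digit_join k = (\<lambda>((e, fs), (n, hs)). (2 ^ k * n + e, map2 (\<lambda>a b. 2 ^ k * a + b) hs fs))"

definition digit_split :: "nat \<Rightarrow> int \<times> int list \<Rightarrow> (int \<times> int list) \<times> (int \<times> int list)" where
  "digit_split k = (\<lambda>(n, hs). ((n mod 2 ^ k, map (\<lambda>h. h mod 2 ^ k) hs),
                               (n div 2 ^ k, map (\<lambda>h. h div 2 ^ k) hs)))"

lemma finite_low_blocks [simp]: "finite (low_blocks s k)"
  unfolding low_blocks_def by (intro finite_cartesian_product finite_lists_length_eq) auto

lemma card_low_blocks: "card (low_blocks s k) = 2 ^ (k * (s + 1))"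
proof -
  have card_digits: "card {0..<(2::int) ^ k} = 2 ^ k" by (simp add: nat_power_eq)
  then have "card {fs. set fs \<subseteq> {0..<(2::int) ^ k} \<and> length fs = s} = (2 ^ k) ^ s"
    using card_lists_length_eq[of "{0..<(2::int) ^ k}" s] by (simp add: nat_power_eq)
  with card_digits show ?thesis unfolding low_blocks_def card_cartesian_product
    by (simp add: power_mult[symmetric] power_add[symmetric] algebra_simps nat_power_eq)
qed

lemma vertex_residue_bounds: "0 \<le> vertex_residue k e fs r \<omega> \<and> vertex_residue k e fs r \<omega> < 2 ^ k"
  unfolding vertex_residue_def by simp

lemma digit_join_vertex:
  assumes "length hs = length fs"
  shows "2 ^ k * n + e + cube_dot \<omega> (map2 (\<lambda>a b. 2 ^ k * a + b) hs fs) + r \<omega>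
       = 2 ^ k * (n + cube_dot \<omega> hs + carry k e fs r \<omega>) + vertex_residue k e fs r \<omega>"
proof -
  have "vertex_offset e fs r \<omega> = 2 ^ k * carry k e fs r \<omega> + vertex_residue k e fs r \<omega>"
    unfolding carry_def vertex_residue_def by simp
  then show ?thesis using cube_dot_map2_affine[OF assms, of \<omega> "2 ^ k"]
    unfolding vertex_offset_def by (simp add: algebra_simps)
qed

lemma digit_join_mem_shifted_cubes_iff:
  assumes "length fs = s" "length hs = s"
  shows "digit_join k ((e, fs), (n, hs)) \<in> shifted_cubes s N r d \<longleftrightarrow>
         (n, hs) \<in> shifted_cubes s (N div 2 ^ k) (carry k e fs r) (carried_slack k N d e fs r)"
proof -
  have N: "int N = 2 ^ k * int (N div 2 ^ k) + int (N mod 2 ^ k)"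
    by (simp add: zdiv_int zmod_int)
  have "(0 \<le> 2 ^ k * n + e + cube_dot \<omega> (map2 (\<lambda>a b. 2 ^ k * a + b) hs fs) + r \<omega> \<and>
        2 ^ k * n + e + cube_dot \<omega> (map2 (\<lambda>a b. 2 ^ k * a + b) hs fs) + r \<omega> < int N + d \<omega>) \<longleftrightarrow>
        (0 \<le> n + cube_dot \<omega> hs + carry k e fs r \<omega> \<and>
        n + cube_dot \<omega> hs + carry k e fs r \<omega> < int (N div 2 ^ k) + carried_slack k N d e fs r \<omega>)"
    for \<omega>
  proof -
    have K: "(2::int) ^ k > 0" by simp
    note b = vertex_residue_bounds[of k e fs r \<omega>]
    show ?thesis
      unfolding digit_join_vertex[of hs fs, OF trans[OF assms(2) assms(1)[symmetric]]] N
        carried_slack_def add.assoc[of "2 ^ k * int (N div 2 ^ k)"]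
        mult_add_nonneg_iff[OF b[THEN conjunct1] b[THEN conjunct2]]
        mult_add_less_iff_less_div[OF K b[THEN conjunct1] b[THEN conjunct2]] ..
  qed
  then show ?thesis unfolding shifted_cubes_def digit_join_def using assms by auto
qed

lemma thue_morse_digit_join_vertex:
  assumes "length hs = length fs" and nonneg: "0 \<le> n + cube_dot \<omega> hs + carry k e fs r \<omega>"
  shows "thue_morse (nat (2 ^ k * n + e + cube_dot \<omega> (map2 (\<lambda>a b. 2 ^ k * a + b) hs fs) + r \<omega>))
       = thue_morse (nat (vertex_residue k e fs r \<omega>)) *
         thue_morse (nat (n + cube_dot \<omega> hs + carry k e fs r \<omega>))"
proof -
  define Y where "Y = n + cube_dot \<omega> hs + carry k e fs r \<omega>"
  define b where "b = vertex_residue k e fs r \<omega>"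
  have b: "0 \<le> b" "b < 2 ^ k" using vertex_residue_bounds unfolding b_def by auto
  have "nat (2 ^ k * n + e + cube_dot \<omega> (map2 (\<lambda>a b. 2 ^ k * a + b) hs fs) + r \<omega>)
      = 2 ^ k * nat Y + nat b"
    unfolding digit_join_vertex[OF assms(1)] Y_def[symmetric] b_def[symmetric]
    using nonneg b unfolding Y_def by (simp add: nat_add_distrib nat_mult_distrib nat_power_eq)
  moreover have "nat b < 2 ^ k" using b by (simp add: nat_less_iff)
  ultimately show ?thesis
    using thue_morse_power2_mult_add[of "nat b" k "nat Y"] unfolding Y_def b_def by simp
qed

lemma digit_join_split [simp]: "digit_join k (digit_split k x) = x"
proof -
  obtain n hs where "x = (n, hs)" by (cases x)
  moreover have "map2 (\<lambda>a b. 2 ^ k * a + b) (map (\<lambda>h. h div 2 ^ k) hs) (map (\<lambda>h. h mod 2 ^ k) hs) = hs"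
    by (rule nth_equalityI) auto
  ultimately show ?thesis unfolding digit_join_def digit_split_def by simp
qed

lemma digit_split_join:
  assumes "(e, fs) \<in> low_blocks s k" "length hs = s"
  shows "digit_split k (digit_join k ((e, fs), (n, hs))) = ((e, fs), (n, hs))"
proof -
  have e: "0 \<le> e" "e < 2 ^ k" and fs: "\<forall>f\<in>set fs. 0 \<le> f \<and> f < 2 ^ k" "length fs = s"
    using assms by (auto simp: low_blocks_def)
  have "(2 ^ k * n + e) mod 2 ^ k = e" "(2 ^ k * n + e) div 2 ^ k = n"
    using e by simp_all
  moreover have "map (\<lambda>h. h mod 2 ^ k) (map2 (\<lambda>a b. 2 ^ k * a + b) hs fs) = fs"
    "map (\<lambda>h. h div 2 ^ k) (map2 (\<lambda>a b. 2 ^ k * a + b) hs fs) = hs"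
    using fs assms(2) nth_mem[of _ fs] by (auto intro!: nth_equalityI)
  ultimately show ?thesis unfolding digit_join_def digit_split_def by simp
qed

lemma bij_betw_digit_join:
  "bij_betw (digit_join k)
     (SIGMA (e, fs):low_blocks s k. shifted_cubes s (N div 2 ^ k) (carry k e fs r) (carried_slack k N d e fs r))
     (shifted_cubes s N r d)"
  (is "bij_betw _ ?S _")
proof (rule bij_betw_byWitness[where f' = "digit_split k"])
  have len: "length fs = s" "length hs = s" if "((e, fs), (n, hs)) \<in> ?S" for e fs n hs
    using that by (auto simp: low_blocks_def shifted_cubes_def)
  show "\<forall>x\<in>?S. digit_split k (digit_join k x) = x"
  proof
    fix x assume S: "x \<in> ?S"
    obtain e fs n hs where x: "x = ((e, fs), (n, hs))" by (metis prod.collapse)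
    have "(e, fs) \<in> low_blocks s k" using S x by simp
    from digit_split_join[OF this len(2)] S x show "digit_split k (digit_join k x) = x" by simp
  qed
  show "\<forall>x\<in>shifted_cubes s N r d. digit_join k (digit_split k x) = x" by simp
  show "digit_join k ` ?S \<subseteq> shifted_cubes s N r d"
  proof
    fix y assume "y \<in> digit_join k ` ?S"
    then obtain e fs n hs where y: "y = digit_join k ((e, fs), (n, hs))" and S: "((e, fs), (n, hs)) \<in> ?S"
      by (metis (no_types, lifting) imageE prod.collapse)
    show "y \<in> shifted_cubes s N r d"
      using digit_join_mem_shifted_cubes_iff[OF len[OF S]] S y by simp
  qed
  show "digit_split k ` shifted_cubes s N r d \<subseteq> ?S"
  proof
    fix y assume "y \<in> digit_split k ` shifted_cubes s N r d"
    then obtain n hs where x: "(n, hs) \<in> shifted_cubes s N r d" and y: "y = digit_split k (n, hs)"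
      by auto
    obtain e fs n' hs' where split: "digit_split k (n, hs) = ((e, fs), (n', hs'))"
      by (metis prod.collapse)
    have "length hs = s" using x by (simp add: shifted_cubes_def)
    then have block: "(e, fs) \<in> low_blocks s k" and len': "length fs = s" "length hs' = s"
      using split by (auto simp: digit_split_def low_blocks_def)
    have "digit_join k ((e, fs), (n', hs')) = (n, hs)"
      using digit_join_split[of k "(n, hs)", unfolded split] .
    then show "y \<in> ?S"
      using digit_join_mem_shifted_cubes_iff[OF len', of k e n' N r d] x block y split by simp
  qed
qed

lemma tm_cube_sum_digit_split:
  "tm_cube_sum s N r d = (\<Sum>(e, fs)\<in>low_blocks s k.
      residue_sign s k e fs r * tm_cube_sum s (N div 2 ^ k) (carry k e fs r) (carried_slack k N d e fs r))"
proof -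
  define g where "g = (\<lambda>(n, hs). \<Prod>\<omega>\<in>cube_vertices s. thue_morse (nat (n + cube_dot \<omega> hs + r \<omega>)))"
  define S where
    "S = (\<lambda>(e, fs). shifted_cubes s (N div 2 ^ k) (carry k e fs r) (carried_slack k N d e fs r))"
  have g_digit_join: "g (digit_join k ((e, fs), (n, hs))) = residue_sign s k e fs r *
      (\<Prod>\<omega>\<in>cube_vertices s. thue_morse (nat (n + cube_dot \<omega> hs + carry k e fs r \<omega>)))"
    if block: "(e, fs) \<in> low_blocks s k" and cube: "(n, hs) \<in> S (e, fs)" for e fs n hs
  proof -
    have "length hs = length fs" using block cube by (simp add: low_blocks_def shifted_cubes_def S_def)
    moreover have "0 \<le> n + cube_dot \<omega> hs + carry k e fs r \<omega>" if "\<omega> \<in> cube_vertices s" for \<omega>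
      using that cube by (simp add: shifted_cubes_def S_def)
    ultimately show ?thesis
      unfolding g_def digit_join_def residue_sign_def prod.distrib[symmetric]
      by (auto intro!: prod.cong simp: thue_morse_digit_join_vertex)
  qed
  have "tm_cube_sum s N r d = sum g (shifted_cubes s N r d)" by (simp add: tm_cube_sum_def g_def)
  also have "\<dots> = (\<Sum>x\<in>Sigma (low_blocks s k) S. g (digit_join k x))"
    unfolding S_def by (rule sum.reindex_bij_betw[OF bij_betw_digit_join, symmetric])
  also have "\<dots> = (\<Sum>p\<in>low_blocks s k. \<Sum>y\<in>S p. g (digit_join k (p, y)))"
    by (subst sum.Sigma) (auto simp: S_def split_def)
  also have "\<dots> = (\<Sum>(e, fs)\<in>low_blocks s k.
      residue_sign s k e fs r * tm_cube_sum s (N div 2 ^ k) (carry k e fs r) (carried_slack k N d e fs r))"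
  proof (rule sum.cong[OF refl], clarify)
    fix e fs assume "(e, fs) \<in> low_blocks s k"
    then show "(\<Sum>y\<in>S (e, fs). g (digit_join k ((e, fs), y))) =
        residue_sign s k e fs r * tm_cube_sum s (N div 2 ^ k) (carry k e fs r) (carried_slack k N d e fs r)"
      unfolding tm_cube_sum_def sum_distrib_left S_def[symmetric]
      by (intro sum.cong) (auto simp: g_digit_join S_def)
  qed
  finally show ?thesis .
qed

section \<open>Cancellation\<close>

definition admissible_shift :: "nat \<Rightarrow> (bool list \<Rightarrow> int) \<Rightarrow> (bool list \<Rightarrow> int) \<Rightarrow> bool" where
  "admissible_shift s r d \<longleftrightarrow>
     (\<forall>\<omega>\<in>cube_vertices s. 0 \<le> r \<omega> \<and> r \<omega> \<le> int s + 1 \<and> 0 \<le> d \<omega> \<and> d \<omega> \<le> 1)"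

lemma admissible_shift_0_0: "admissible_shift s (\<lambda>_. 0) (\<lambda>_. 0)"
  by (simp add: admissible_shift_def)

lemma admissible_shift_carry:
  assumes adm: "admissible_shift s r d" and block: "(e, fs) \<in> low_blocks s k"
  shows "admissible_shift s (carry k e fs r) (carried_slack k N d e fs r)"
  unfolding admissible_shift_def
proof
  fix \<omega> assume \<omega>: "\<omega> \<in> cube_vertices s"
  define K :: int where "K = 2 ^ k"
  have K: "K > 0" by (simp add: K_def)
  have r: "0 \<le> r \<omega>" "r \<omega> \<le> int s + 1" and d: "0 \<le> d \<omega>" "d \<omega> \<le> 1"
    using adm \<omega> by (auto simp: admissible_shift_def)
  have e: "0 \<le> e" "e \<le> K - 1" and fs: "\<forall>f\<in>set fs. 0 \<le> f \<and> f \<le> K - 1" "length fs = s"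
    using block by (auto simp: low_blocks_def K_def)
  have "0 \<le> cube_dot \<omega> fs" "cube_dot \<omega> fs \<le> int s * (K - 1)"
    using cube_dot_bounds[OF fs(1)] fs(2) by auto
  then have "0 \<le> vertex_offset e fs r \<omega>" "vertex_offset e fs r \<omega> < K * (int s + 2)"
    using e r K unfolding vertex_offset_def by (simp_all add: algebra_simps)
  then have "0 \<le> carry k e fs r \<omega> \<and> \<not> int s + 2 \<le> carry k e fs r \<omega>"
    using int_le_div_iff_mult_le[OF K, of 0 "vertex_offset e fs r \<omega>"]
      int_le_div_iff_mult_le[OF K, of "int s + 2" "vertex_offset e fs r \<omega>"]
    unfolding carry_def K_def[symmetric] by simp
  then have "0 \<le> carry k e fs r \<omega> \<and> carry k e fs r \<omega> \<le> int s + 1" by simp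
  moreover have "0 \<le> carried_slack k N d e fs r \<omega> \<and> carried_slack k N d e fs r \<omega> \<le> 1"
  proof -
    define n0 where "n0 = int (N mod 2 ^ k) + d \<omega> - vertex_residue k e fs r \<omega> - 1 + K"
    have "int (N mod 2 ^ k) < K" unfolding K_def by (simp add: zmod_int[symmetric])
    then have "0 \<le> n0" "n0 < K * 2"
      using d vertex_residue_bounds[of k e fs r \<omega>] unfolding n0_def K_def by linarith+
    then have "0 \<le> n0 div K \<and> \<not> 2 \<le> n0 div K"
      using int_le_div_iff_mult_le[OF K, of 0 n0] int_le_div_iff_mult_le[OF K, of 2 n0] by auto
    moreover have "carried_slack k N d e fs r \<omega> = n0 div K"
      unfolding carried_slack_def n0_def K_def ..
    ultimately show ?thesis by linarith
  qed
  ultimately show "0 \<le> carry k e fs r \<omega> \<and> carry k e fs r \<omega> \<le> int s + 1 \<and>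
      0 \<le> carried_slack k N d e fs r \<omega> \<and> carried_slack k N d e fs r \<omega> \<le> 1" by simp
qed

text \<open>If the offset of a vertex lies in the half of \<open>[0, 2^k)\<close> selected by \<open>bt\<close>, it produces no carry,
  and the truncation at \<open>N\<close> no longer sees the offset: the slack is \<open>1 - bt\<close> for all such vertices.\<close>
lemma carry_slack_in_window:
  assumes k: "k = Suc j"
    and bt: "bt = (if 2 ^ j \<le> N mod 2 ^ k then 0 else 1)"
    and d: "0 \<le> d \<omega>" "d \<omega> \<le> 1"
    and window: "2 ^ j * int bt \<le> vertex_offset e fs r \<omega>" "vertex_offset e fs r \<omega> < 2 ^ j * int bt + 2 ^ j"
  shows "carry k e fs r \<omega> = 0 \<and> vertex_residue k e fs r \<omega> = vertex_offset e fs r \<omega>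
    \<and> carried_slack k N d e fs r \<omega> = 1 - int bt"
proof -
  define H :: int where "H = 2 ^ j"
  have K: "(2::int) ^ k = 2 * H" "(2::int) ^ k > 0" unfolding k H_def by simp_all
  define \<nu> where "\<nu> = int (N mod 2 ^ k)"
  have \<nu>: "0 \<le> \<nu>" "\<nu> < 2 * H" unfolding \<nu>_def K(1)[symmetric]
    by (simp_all add: zmod_int[symmetric])
  have H_le_\<nu>: "bt = 0 \<longleftrightarrow> H \<le> \<nu>" unfolding bt H_def \<nu>_def
    by (metis of_nat_le_iff of_nat_numeral of_nat_power zero_neq_one)
  have offset: "0 \<le> vertex_offset e fs r \<omega>" "vertex_offset e fs r \<omega> < 2 * H"
    using window bt unfolding H_def by (auto split: if_splits)
  then have "carry k e fs r \<omega> = 0" "vertex_residue k e fs r \<omega> = vertex_offset e fs r \<omega>"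
    unfolding carry_def vertex_residue_def K(1) by simp_all
  moreover have "(\<nu> + d \<omega> - vertex_offset e fs r \<omega> - 1 + 2 * H) div (2 * H) = 1 - int bt"
  proof (cases "bt = 0")
    case True
    then show ?thesis using int_div_eq_iff[of "2 * H" _ 1] window d \<nu> H_le_\<nu> unfolding H_def by simp
  next
    case False
    then have "bt = 1" using bt by (simp split: if_splits)
    then show ?thesis using int_div_eq_iff[of "2 * H" _ 0] window d \<nu> H_le_\<nu> unfolding H_def by simp
  qed
  then have "carried_slack k N d e fs r \<omega> = 1 - int bt"
    unfolding carried_slack_def \<nu>_def[symmetric] K(1) \<open>vertex_residue k e fs r \<omega> = _\<close> .
  ultimately show ?thesis by simp
qed

lemma window_block_digits:
  fixes a b bt :: nat
  assumes k: "k = Suc (m + k')"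
    and bt: "bt = (if 2 ^ (m + k') \<le> N mod 2 ^ k then 0 else 1)"
    and \<omega>: "\<omega> \<in> cube_vertices s"
    and r: "0 \<le> r \<omega>" "r \<omega> < 2 ^ m" and d: "0 \<le> d \<omega>" "d \<omega> \<le> 1"
    and ab: "a + b * cube_weight \<omega> < 2 ^ k'"
    and e: "e = 2 ^ (m + k') * int bt + 2 ^ m * int a"
    and fs: "fs = replicate s (2 ^ m * int b)"
  shows "carry k e fs r \<omega> = 0 \<and> carried_slack k N d e fs r \<omega> = 1 - int bt \<and>
    thue_morse (nat (vertex_residue k e fs r \<omega>)) =
      thue_morse bt * thue_morse (nat (r \<omega>)) * thue_morse (a + b * cube_weight \<omega>)"
proof -
  define c where "c = a + b * cube_weight \<omega>"
  have offset: "vertex_offset e fs r \<omega> = 2 ^ (m + k') * int bt + (2 ^ m * int c + r \<omega>)"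
    using \<omega> cube_dot_replicate[of \<omega> s "2 ^ m * int b"]
    unfolding vertex_offset_def e fs c_def cube_vertices_def by (simp add: algebra_simps)
  have "int c + 1 \<le> 2 ^ k'" using ab unfolding c_def by (metis of_nat_less_iff of_nat_numeral
      of_nat_power add1_zle_eq)
  then have "2 ^ m * (int c + 1) \<le> (2::int) ^ m * 2 ^ k'" by (intro mult_left_mono) auto
  then have low: "0 \<le> 2 ^ m * int c + r \<omega>" "2 ^ m * int c + r \<omega> < 2 ^ (m + k')"
    using r by (simp_all add: power_add algebra_simps)
  have window: "carry k e fs r \<omega> = 0 \<and> vertex_residue k e fs r \<omega> = vertex_offset e fs r \<omega>
      \<and> carried_slack k N d e fs r \<omega> = 1 - int bt"
    by (rule carry_slack_in_window[where j = "m + k'" and d = d and \<omega> = \<omega>, OF k bt d])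
      (use offset low in simp_all)
  have "int (2 ^ m * (2 ^ k' * bt + c) + nat (r \<omega>)) = vertex_residue k e fs r \<omega>"
    using window offset r by (simp add: power_add algebra_simps)
  then have "nat (vertex_residue k e fs r \<omega>) = 2 ^ m * (2 ^ k' * bt + c) + nat (r \<omega>)" by linarith
  moreover have "nat (r \<omega>) < 2 ^ m" using r by (simp add: nat_less_iff)
  moreover have "c < 2 ^ k'" using ab unfolding c_def .
  ultimately have "thue_morse (nat (vertex_residue k e fs r \<omega>)) =
      thue_morse bt * thue_morse c * thue_morse (nat (r \<omega>))"
    by (simp add: thue_morse_power2_mult_add)
  with window show ?thesis unfolding c_def by simp
qed

text \<open>The residue signs of the two blocks differ by \<open>\<Prod>\<^sub>\<omega> t (y + |\<omega>|) = (mult_diff ^^ s) t y = -1\<close>.\<close>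
lemma cancelling_low_blocks:
  assumes s: "s \<ge> 1" and m: "int s + 1 < 2 ^ m" and y: "(mult_diff ^^ s) thue_morse y = -1"
    and k': "y + s < 2 ^ k'" and k: "k = Suc (m + k')"
    and adm: "admissible_shift s r d"
  obtains e fs e' fs' where "(e, fs) \<in> low_blocks s k" "(e', fs') \<in> low_blocks s k" "(e, fs) \<noteq> (e', fs')"
    "residue_sign s k e' fs' r = - residue_sign s k e fs r"
    "\<And>\<omega>. \<omega> \<in> cube_vertices s \<Longrightarrow> carry k e' fs' r \<omega> = carry k e fs r \<omega>"
    "\<And>\<omega>. \<omega> \<in> cube_vertices s \<Longrightarrow> carried_slack k N d e' fs' r \<omega> = carried_slack k N d e fs r \<omega>"
proof -
  define bt :: nat where "bt = (if 2 ^ (m + k') \<le> N mod 2 ^ k then 0 else 1)"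
  define block :: "nat \<Rightarrow> nat \<Rightarrow> int \<times> int list" where
    "block a b = (2 ^ (m + k') * int bt + 2 ^ m * int a, replicate s (2 ^ m * int b))" for a b
  have r: "0 \<le> r \<omega>" "r \<omega> < 2 ^ m" and d: "0 \<le> d \<omega>" "d \<omega> \<le> 1" if "\<omega> \<in> cube_vertices s" for \<omega>
    using adm that m by (auto simp: admissible_shift_def)
  have weight: "cube_weight \<omega> \<le> s" if "\<omega> \<in> cube_vertices s" for \<omega>
    using that cube_weight_le_length[of \<omega>] by (simp add: cube_vertices_def)
  have digits: "carry k (fst (block a b)) (snd (block a b)) r \<omega> = 0 \<and>
      carried_slack k N d (fst (block a b)) (snd (block a b)) r \<omega> = 1 - int bt \<and>
      thue_morse (nat (vertex_residue k (fst (block a b)) (snd (block a b)) r \<omega>)) =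
        thue_morse bt * thue_morse (nat (r \<omega>)) * thue_morse (a + b * cube_weight \<omega>)"
    if "\<omega> \<in> cube_vertices s" "a + b * s < 2 ^ k'" "b \<le> 1" for a b \<omega>
  proof (rule window_block_digits[where r = r and d = d and \<omega> = \<omega>,
        OF k bt_def that(1) r[OF that(1)] d[OF that(1)]])
    show "a + b * cube_weight \<omega> < 2 ^ k'"
      using that weight[OF that(1)] by (cases b) auto
  qed (simp_all add: block_def)
  have sign: "residue_sign s k (fst (block a b)) (snd (block a b)) r =
      (\<Prod>\<omega>\<in>cube_vertices s. thue_morse bt * thue_morse (nat (r \<omega>))) *
      (\<Prod>\<omega>\<in>cube_vertices s. thue_morse (a + b * cube_weight \<omega>))"
    if "a + b * s < 2 ^ k'" "b \<le> 1" for a b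
    unfolding residue_sign_def prod.distrib[symmetric] using digits that by (auto intro!: prod.cong)
  have block_mem: "block a b \<in> low_blocks s k" if "a < 2 ^ k'" "b \<le> 1" for a b
  proof -
    have "int a < 2 ^ k'" using that(1) by (metis of_nat_less_iff of_nat_numeral of_nat_power)
    then have a: "(2::int) ^ m * int a < 2 ^ (m + k')" by (simp add: power_add)
    then have a': "(2::int) ^ m * int a < 2 * 2 ^ (m + k')" by (smt (verit) zero_less_power)
    have "(2::int) ^ m \<le> 2 ^ (m + k')" by (simp add: power_increasing)
    then have "(2::int) ^ m < 2 * 2 ^ (m + k')" by (smt (verit) zero_less_power)
    then have b: "(2::int) ^ m * int b < 2 * 2 ^ (m + k')"
      using that(2) by (cases "b = 0") (auto simp: le_Suc_eq)
    show ?thesis using a a' b unfolding block_def low_blocks_def k power_Suc bt_def by auto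
  qed
  have "y < 2 ^ k'" using k' by simp
  show ?thesis
  proof (rule that[of "fst (block 0 0)" "snd (block 0 0)" "fst (block y 1)" "snd (block y 1)"])
    show "(fst (block 0 0), snd (block 0 0)) \<in> low_blocks s k"
      "(fst (block y 1), snd (block y 1)) \<in> low_blocks s k"
      using block_mem \<open>y < 2 ^ k'\<close> by simp_all
    show "(fst (block 0 0), snd (block 0 0)) \<noteq> (fst (block y 1), snd (block y 1))"
      using s by (cases s) (simp_all add: block_def)
    show "residue_sign s k (fst (block y 1)) (snd (block y 1)) r =
        - residue_sign s k (fst (block 0 0)) (snd (block 0 0)) r"
      using sign[of 0 0] sign[of y 1] k' y
        prod_cube_vertices_mult_diff_iter[where s = s and g = thue_morse and y = y] by simp
  qed (use digits k' in simp_all)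
qed

section \<open>Power saving\<close>

lemma abs_tm_cube_sum_le_recursive:
  assumes s: "s \<ge> 1" and m: "int s + 1 < 2 ^ m" and y: "(mult_diff ^^ s) thue_morse y = -1"
    and k': "y + s < 2 ^ k'" and k: "k = Suc (m + k')"
    and adm: "admissible_shift s r d"
    and M: "\<And>r' d'. admissible_shift s r' d' \<Longrightarrow> \<bar>tm_cube_sum s (N div 2 ^ k) r' d'\<bar> \<le> M"
  shows "\<bar>tm_cube_sum s N r d\<bar> \<le> (2 ^ (k * (s + 1)) - 2) * M"
proof -
  obtain e fs e' fs' where A: "(e, fs) \<in> low_blocks s k" and B: "(e', fs') \<in> low_blocks s k"
    and AB: "(e, fs) \<noteq> (e', fs')"
    and sign: "residue_sign s k e' fs' r = - residue_sign s k e fs r"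
    and carry: "\<And>\<omega>. \<omega> \<in> cube_vertices s \<Longrightarrow> carry k e' fs' r \<omega> = carry k e fs r \<omega>"
    and slack: "\<And>\<omega>. \<omega> \<in> cube_vertices s \<Longrightarrow> carried_slack k N d e' fs' r \<omega> = carried_slack k N d e fs r \<omega>"
    using cancelling_low_blocks[OF s m y k' k adm] by metis
  define F where "F = (\<lambda>(e, fs). residue_sign s k e fs r *
      tm_cube_sum s (N div 2 ^ k) (carry k e fs r) (carried_slack k N d e fs r))"
  define R where "R = low_blocks s k - {(e, fs), (e', fs')}"
  have "F (e', fs') = - F (e, fs)"
    unfolding F_def using sign tm_cube_sum_cong[OF carry slack] by simp
  then have "sum F {(e, fs), (e', fs')} = 0" using AB by simp
  moreover have "tm_cube_sum s N r d = sum F R + sum F {(e, fs), (e', fs')}"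
    unfolding tm_cube_sum_digit_split[of s N r d k] F_def[symmetric] R_def
    by (rule sum.subset_diff) (use A B in auto)
  ultimately have "\<bar>tm_cube_sum s N r d\<bar> \<le> (\<Sum>p\<in>R. \<bar>F p\<bar>)" by (simp add: sum_abs)
  also have "\<dots> \<le> (\<Sum>p\<in>R. M)"
  proof (rule sum_mono, clarify)
    fix e fs assume "(e, fs) \<in> R"
    then have "admissible_shift s (carry k e fs r) (carried_slack k N d e fs r)"
      using admissible_shift_carry[OF adm] by (simp add: R_def)
    then show "\<bar>F (e, fs)\<bar> \<le> M"
      using M by (simp add: F_def abs_mult residue_sign_def abs_prod)
  qed
  also have "\<dots> = (2 ^ (k * (s + 1)) - 2) * M"
  proof -
    have "card R = 2 ^ (k * (s + 1)) - 2"
      using A B AB by (simp add: R_def card_Diff_subset card_low_blocks)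
    then show ?thesis
      using A B AB card_low_blocks[of s k] card_mono[of "low_blocks s k" "{(e, fs), (e', fs')}"]
      by (simp add: of_nat_diff)
  qed
  finally show ?thesis .
qed

text \<open>The recursion loses only the factor \<open>2^(k(s+1)) - 2 = (2^k)^\<alpha>\<close> per \<open>k\<close> binary digits of \<open>N\<close>.\<close>
lemma abs_tm_cube_sum_le_powr:
  assumes s: "s \<ge> 1" and m: "int s + 1 < 2 ^ m" and y: "(mult_diff ^^ s) thue_morse y = -1"
    and k': "y + s < 2 ^ k'" and k: "k = Suc (m + k')"
    and \<alpha>: "(2 ^ k) powr \<alpha> = 2 ^ (k * (s + 1)) - (2::real)"
    and adm: "admissible_shift s r d"
  shows "\<bar>tm_cube_sum s N r d\<bar> \<le> 2 ^ (k * (s + 1)) * max 1 (real N) powr \<alpha>"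
  using adm
proof (induction N arbitrary: r d rule: less_induct)
  case (less N)
  define T :: real where "T = 2 ^ (k * (s + 1))"
  have "(2::real) ^ 2 \<le> T" unfolding T_def using s k by (intro power_increasing) auto
  then have T: "T \<ge> 4" by simp
  have "(2::real) ^ k > 1" by (rule one_less_power) (simp_all add: k)
  moreover have "(2 ^ k) powr 0 < ((2::real) ^ k) powr \<alpha>" using \<alpha> T unfolding T_def by simp
  ultimately have "\<alpha> > 0" by (simp only: powr_less_cancel_iff)
  then have max_powr: "1 \<le> max 1 (real N) powr \<alpha>" by (intro ge_one_powr_ge_zero) auto
  show ?case
  proof (cases "N div 2 ^ k = 0")
    case True
    have "\<bar>tm_cube_sum s N r d\<bar> \<le> (T - 2) * 1" unfolding T_def
      by (rule abs_tm_cube_sum_le_recursive[OF s m y k' k less.prems])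
        (use True abs_tm_cube_sum_0_le_1 in \<open>auto simp: admissible_shift_def\<close>)
    also have "\<dots> \<le> T * 1" by simp
    also have "\<dots> \<le> T * max 1 (real N) powr \<alpha>" using max_powr T by (intro mult_left_mono) auto
    finally show ?thesis unfolding T_def .
  next
    case False
    define N' where "N' = N div 2 ^ k"
    have "(1::nat) < 2 ^ k" by (rule one_less_power) (simp_all add: k)
    moreover have "N \<noteq> 0" using False by (cases N) auto
    ultimately have "N' < N" "N' \<ge> 1" using False unfolding N'_def by simp_all
    have "\<bar>tm_cube_sum s N r d\<bar> \<le> (T - 2) * (T * real N' powr \<alpha>)" unfolding T_def
      by (rule abs_tm_cube_sum_le_recursive[OF s m y k' k less.prems])
        (use less.IH[OF \<open>N' < N\<close>] \<open>N' \<ge> 1\<close> in \<open>simp add: N'_def\<close>)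
    also have "\<dots> = T * (2 ^ k * real N') powr \<alpha>"
      using \<alpha> by (simp add: T_def powr_mult)
    also have "\<dots> \<le> T * max 1 (real N) powr \<alpha>"
    proof -
      have "2 ^ k * N' \<le> N" unfolding N'_def by simp
      then have "2 ^ k * real N' \<le> max 1 (real N)"
        by (metis max.coboundedI2 of_nat_le_iff of_nat_mult of_nat_numeral of_nat_power)
      then show ?thesis using \<open>\<alpha> > 0\<close> T by (intro mult_left_mono powr_mono2) auto
    qed
    finally show ?thesis unfolding T_def .
  qed
qed

lemma tm_cube_sum_power_saving:
  assumes "s \<ge> 1"
  shows "\<exists>\<alpha> C. \<alpha> < real s + 1 \<and> C > 0 \<and>
    (\<forall>N. \<bar>tm_cube_sum s N (\<lambda>_. 0) (\<lambda>_. 0)\<bar> \<le> C * max 1 (real N) powr \<alpha>)"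
proof -
  obtain y where y: "(mult_diff ^^ s) thue_morse y = -1" using thue_morse_mult_diff_iter_neg by blast
  define k where "k = Suc (s + 1 + (y + s + 1))"
  define T :: real where "T = 2 ^ (k * (s + 1))"
  define \<alpha> where "\<alpha> = log 2 (T - 2) / real k"
  have m: "int s + 1 < 2 ^ (s + 1)"
    using less_exp[of "s + 1"] by (metis of_nat_1 of_nat_add of_nat_less_iff of_nat_numeral of_nat_power)
  have k': "y + s < 2 ^ (y + s + 1)" using less_exp[of "y + s + 1"] by simp
  have "(2::real) ^ 2 \<le> T" unfolding T_def k_def by (intro power_increasing) auto
  then have T: "T \<ge> 4" by simp
  have "(2 ^ k) powr \<alpha> = 2 powr (real k * \<alpha>)"
    by (simp add: powr_realpow[symmetric] powr_powr)
  also have "\<dots> = T - 2" using T by (simp add: \<alpha>_def k_def)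
  finally have "(2 ^ k) powr \<alpha> = T - 2" .
  have "log 2 (T - 2) < log 2 T" using T by simp
  also have "log 2 T = real k * (real s + 1)" by (simp add: T_def log_nat_power algebra_simps)
  finally have "\<alpha> < real s + 1" unfolding \<alpha>_def k_def by (simp add: divide_simps mult.commute)
  moreover have "\<bar>tm_cube_sum s N (\<lambda>_. 0) (\<lambda>_. 0)\<bar> \<le> T * max 1 (real N) powr \<alpha>" for N
    unfolding T_def
    by (rule abs_tm_cube_sum_le_powr[OF assms m y k' k_def _ admissible_shift_0_0])
      (use \<open>(2 ^ k) powr \<alpha> = T - 2\<close> in \<open>simp add: T_def\<close>)
  ultimately show ?thesis using T by (intro exI[of _ \<alpha>] exI[of _ T]) auto
qed

text \<open>All cubes with \<open>n\<close> and the entries of \<open>hs\<close> in \<open>[0, N div (s + 1))\<close> lie in \<open>[N]\<close>.\<close>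
lemma card_gowers_cubes_ge:
  assumes N: "N \<ge> 2 * (s + 1)"
  shows "(real N / (2 * (real s + 1))) ^ (s + 1) \<le> real (card (gowers_cubes s N))"
proof -
  define M where "M = N div (s + 1)"
  define box where "box = {0..<int M} \<times> {hs. set hs \<subseteq> {0..<int M} \<and> length hs = s}"
  have "box \<subseteq> gowers_cubes s N"
  proof clarify
    fix n hs assume "(n, hs) \<in> box"
    then have n: "0 \<le> n" "n \<le> int M - 1" and hs: "\<forall>h\<in>set hs. 0 \<le> h \<and> h \<le> int M - 1" "length hs = s"
      unfolding box_def by auto
    have "(s + 1) * M \<le> N" unfolding M_def by (rule times_div_less_eq_dividend)
    then have "int ((s + 1) * M) \<le> int N" by (simp only: of_nat_le_iff)
    then have sM: "(int s + 1) * int M \<le> int N" by (simp add: algebra_simps)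
    have "0 \<le> n + cube_dot \<omega> hs \<and> n + cube_dot \<omega> hs < int N" for \<omega>
    proof -
      have "0 \<le> cube_dot \<omega> hs" "cube_dot \<omega> hs \<le> int s * (int M - 1)"
        using cube_dot_bounds[OF hs(1)] hs(2) by auto
      moreover have "(int M - 1) + int s * (int M - 1) = (int s + 1) * int M - (int s + 1)"
        by (simp add: algebra_simps)
      ultimately show ?thesis using n sM by linarith
    qed
    then show "(n, hs) \<in> gowers_cubes s N" unfolding gowers_cubes_def using hs by auto
  qed
  moreover have "finite (gowers_cubes s N)"
    using finite_shifted_cubes[of s N "\<lambda>_. 0" "\<lambda>_. 0"] by (simp add: shifted_cubes_0_0)
  moreover have "card box = M ^ (s + 1)"
    unfolding box_def card_cartesian_product using card_lists_length_eq[of "{0..<int M}" s] by simp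
  ultimately have "real M ^ (s + 1) \<le> real (card (gowers_cubes s N))"
    by (metis card_mono of_nat_le_iff of_nat_power)
  moreover have "real N / (2 * (real s + 1)) \<le> real M"
  proof -
    have "real N = (real s + 1) * real M + real (N mod (s + 1))"
      unfolding M_def using mult_div_mod_eq[of "s + 1" N, THEN arg_cong[where f = real]]
      by (simp add: algebra_simps)
    moreover have "real (N mod (s + 1)) \<le> real s + 1"
      using mod_less_divisor[of "s + 1" N] by linarith
    moreover have "real (2 * (s + 1)) \<le> real N" using N by (simp only: of_nat_le_iff)
    then have "2 * (real s + 1) \<le> real N" by simp
    ultimately show ?thesis by (simp add: field_simps)
  qed
  then have "(real N / (2 * (real s + 1))) ^ (s + 1) \<le> real M ^ (s + 1)"
    by (rule power_mono) simp
  ultimately show ?thesis by linarith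
qed

lemma abs_gowers_power_thue_morse_le:
  assumes "s \<ge> 1"
  obtains \<alpha> B where "\<alpha> < real s + 1" "B > 0"
    "\<And>N. N \<ge> 2 * (s + 1) \<Longrightarrow> \<bar>gowers_power s N thue_morse\<bar> \<le> B * real N powr (\<alpha> - (real s + 1))"
proof -
  obtain \<alpha> C where \<alpha>: "\<alpha> < real s + 1" and C: "C > 0"
    and bound: "\<And>N. \<bar>tm_cube_sum s N (\<lambda>_. 0) (\<lambda>_. 0)\<bar> \<le> C * max 1 (real N) powr \<alpha>"
    using tm_cube_sum_power_saving[OF assms] by blast
  define B where "B = C * (2 * (real s + 1)) ^ (s + 1)"
  have "\<bar>gowers_power s N thue_morse\<bar> \<le> B * real N powr (\<alpha> - (real s + 1))"
    if N: "N \<ge> 2 * (s + 1)" for N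
  proof -
    have N_pos: "real N > 0" using N by simp
    define Q where "Q = (real N / (2 * (real s + 1))) ^ (s + 1)"
    have "Q > 0" unfolding Q_def using N_pos by simp
    have Q: "Q = real N powr (real s + 1) / (2 * (real s + 1)) ^ (s + 1)"
      unfolding Q_def using powr_realpow[OF N_pos, of "s + 1"] by (simp add: power_divide add.commute)
    have "\<bar>gowers_power s N thue_morse\<bar>
        = \<bar>tm_cube_sum s N (\<lambda>_. 0) (\<lambda>_. 0)\<bar> / real (card (gowers_cubes s N))"
      by (simp add: gowers_power_thue_morse_eq)
    also have "\<dots> \<le> C * real N powr \<alpha> / Q"
      using bound[of N] card_gowers_cubes_ge[OF N] \<open>Q > 0\<close> N_pos unfolding Q_def
      by (intro frac_le) auto
    also have "\<dots> = B * real N powr (\<alpha> - (real s + 1))"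
      unfolding Q B_def using N_pos by (simp add: powr_diff field_simps)
    finally show ?thesis .
  qed
  moreover have "B > 0" unfolding B_def using C by simp
  ultimately show ?thesis using \<alpha> that by blast
qed

theorem theoremA:
  fixes s :: nat
  assumes "s \<ge> 1"
  shows "\<exists>c>0. (\<lambda>N. gowers_norm s N thue_morse) \<in> O(\<lambda>N. real N powr (- c))"
proof -
  obtain \<alpha> B where \<alpha>: "\<alpha> < real s + 1" and B: "B > 0"
    and power: "\<And>N. N \<ge> 2 * (s + 1) \<Longrightarrow>
      \<bar>gowers_power s N thue_morse\<bar> \<le> B * real N powr (\<alpha> - (real s + 1))"
    using abs_gowers_power_thue_morse_le[OF assms] by blast
  define c where "c = (real s + 1 - \<alpha>) / 2 ^ s"
  have "\<bar>gowers_norm s N thue_morse\<bar> \<le> B powr (1 / 2 ^ s) * real N powr (- c)"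
    if N: "N \<ge> 2 * (s + 1)" for N
  proof -
    have N_pos: "real N > 0" using N by simp
    have "\<bar>gowers_norm s N thue_morse\<bar> = root (2 ^ s) \<bar>gowers_power s N thue_morse\<bar>"
      unfolding gowers_norm_def by (simp add: real_root_abs)
    also have "\<dots> \<le> root (2 ^ s) (B * real N powr (\<alpha> - (real s + 1)))"
      using power[OF N] by simp
    also have "\<dots> = (B * real N powr (\<alpha> - (real s + 1))) powr (1 / 2 ^ s)"
      using B N_pos by (subst root_powr_inverse) auto
    also have "\<dots> = B powr (1 / 2 ^ s) * real N powr (- c)"
      using B N_pos by (simp add: powr_mult powr_powr c_def minus_divide_left)
    finally show ?thesis .
  qed
  then have "(\<lambda>N. gowers_norm s N thue_morse) \<in> O(\<lambda>N. real N powr (- c))"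
    by (intro bigoI[where c = "B powr (1 / 2 ^ s)"]) (auto simp: eventually_at_top_linorder)
  moreover have "c > 0" unfolding c_def using \<alpha> by simp
  ultimately show ?thesis by blast
qed

end
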